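(* There is a universal constant $K>0$ such that the following holds. Let $\sigma$ be a full-rank $d$-dimensional quantum state with eigendecomposition $\sigma=\sum_iq(i)|e_i\rangle\langle e_i|$ and minimum eigenvalue $\gamma$; let $\rho_1,\dots,\rho_T$ be $d$-dimensional states, $\varrho=\rho_1\otimes\cdots\otimes\rho_T$, $\rho=\frac1T\sum_t\rho_t$, $\mu=D_{\chi^2}(\rho\,\|\,\sigma)$. Let $C=\sum_{i,j}\frac{|e_je_i\rangle\langle e_ie_j|}{q(i,j)}$ with $q(i,j)=\frac{q(i)+q(j)}2$, let $C_{st}$ denote $C$ applied to tensor components $s,t$ of $(\mathbb C^d)^{\otimes T}$, and $M_t=\frac1{T^2}\sum_{s\ne t}C_{st}$. Then $$\sum_{t=1}^T\mathbb E_{\varrho\otimes\varrho}\big[(M_t\otimes I)F_t(M_t\otimes I)F_t\big]\ge\Big(\frac1T-\frac2{T^3}\sum_{t=1}^T\mathbb E_{\rho_t\otimes\rho_t}[C]\Big)-K\Big(\frac{d^2}{T^2}+\frac{d\mu}{\gamma T^2}\Big).$$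
   Context: $\mathbb E_\tau[Y]=\mathrm{Tr}[\tau Y]$. $F_t$ is the swap operator on $(\mathbb C^d)^{\otimes T}\otimes(\mathbb C^d)^{\otimes T}$ exchanging the $t$th tensor component of the first copy with the $t$th tensor component of the second copy. Bures $\chi^2$-divergence: writing $\sigma=U\,\mathrm{diag}(q_1,\dots,q_d)U^\dagger$ and $\rho'=U^\dagger\rho U$, $D_{\chi^2}(\rho\,\|\,\sigma)=\sum_{i,j}\frac{2}{q_i+q_j}|\rho'_{ij}|^2-1$. *)

theory Defs
  imports Complex_Main
begin

text \<open>Finite-dimensional operators are represented by their matrix entries
  with respect to a computational basis indexed by a finite index set.
  A d-dimensional operator is a function nat => nat => complex restricted
  to indices below d.  The basis of the T-fold tensor power of C^d is indexed
  by lists of length T with entries below d.\<close>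

definition idx :: "nat \<Rightarrow> nat \<Rightarrow> nat list set" where
  "idx d T = {xs. length xs = T \<and> set xs \<subseteq> {..<d}}"

definition mmul :: "'i set \<Rightarrow> ('i \<Rightarrow> 'i \<Rightarrow> complex) \<Rightarrow> ('i \<Rightarrow> 'i \<Rightarrow> complex) \<Rightarrow> ('i \<Rightarrow> 'i \<Rightarrow> complex)" where
  "mmul I A B = (\<lambda>x y. \<Sum>z\<in>I. A x z * B z y)"

definition mtrace :: "'i set \<Rightarrow> ('i \<Rightarrow> 'i \<Rightarrow> complex) \<Rightarrow> complex" where
  "mtrace I A = (\<Sum>x\<in>I. A x x)"

definition expect :: "'i set \<Rightarrow> ('i \<Rightarrow> 'i \<Rightarrow> complex) \<Rightarrow> ('i \<Rightarrow> 'i \<Rightarrow> complex) \<Rightarrow> complex" where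
  "expect I \<tau> Y = mtrace I (mmul I \<tau> Y)"

definition tens :: "('i \<Rightarrow> 'i \<Rightarrow> complex) \<Rightarrow> ('j \<Rightarrow> 'j \<Rightarrow> complex) \<Rightarrow> ('i \<times> 'j \<Rightarrow> 'i \<times> 'j \<Rightarrow> complex)" where
  "tens A B = (\<lambda>(x, x') (y, y'). A x y * B x' y')"

definition idop :: "'i \<Rightarrow> 'i \<Rightarrow> complex" where
  "idop = (\<lambda>x y. if x = y then 1 else 0)"

definition is_state :: "nat \<Rightarrow> (nat \<Rightarrow> nat \<Rightarrow> complex) \<Rightarrow> bool" where
  "is_state d \<rho> \<longleftrightarrow>
     (\<forall>a<d. \<forall>b<d. \<rho> a b = cnj (\<rho> b a)) \<and>
     (\<forall>v :: nat \<Rightarrow> complex. 0 \<le> Re (\<Sum>a<d. \<Sum>b<d. cnj (v a) * \<rho> a b * v b)) \<and>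
     (\<Sum>a<d. \<rho> a a) = 1"

text \<open>Vectors e 0, ..., e (d-1) (e i a = a-th coordinate of e_i) form an orthonormal basis of C^d.\<close>
definition orthonormal_basis :: "nat \<Rightarrow> (nat \<Rightarrow> nat \<Rightarrow> complex) \<Rightarrow> bool" where
  "orthonormal_basis d e \<longleftrightarrow>
     (\<forall>i<d. \<forall>j<d. (\<Sum>a<d. cnj (e i a) * e j a) = (if i = j then 1 else 0))"

text \<open>Bures chi^2 divergence, with sigma = U diag(q) U^dagger where the columns of U are the e_i,
  and rho' = U^dagger rho U.\<close>
definition bures_chi2 :: "nat \<Rightarrow> (nat \<Rightarrow> nat \<Rightarrow> complex) \<Rightarrow> (nat \<Rightarrow> real) \<Rightarrow> (nat \<Rightarrow> nat \<Rightarrow> complex) \<Rightarrow> real" where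
  "bures_chi2 d e q \<rho> =
     (\<Sum>i<d. \<Sum>j<d. 2 / (q i + q j) *
        (cmod (\<Sum>a<d. \<Sum>b<d. cnj (e i a) * \<rho> a b * e j b))\<^sup>2) - 1"

definition Cop :: "nat \<Rightarrow> (nat \<Rightarrow> nat \<Rightarrow> complex) \<Rightarrow> (nat \<Rightarrow> real) \<Rightarrow> (nat \<times> nat \<Rightarrow> nat \<times> nat \<Rightarrow> complex)" where
  "Cop d e q = (\<lambda>(a, b) (c, c'). \<Sum>i<d. \<Sum>j<d.
      e j a * e i b * cnj (e i c) * cnj (e j c') / complex_of_real ((q i + q j) / 2))"

definition Cst :: "nat \<Rightarrow> (nat \<times> nat \<Rightarrow> nat \<times> nat \<Rightarrow> complex) \<Rightarrow> nat \<Rightarrow> nat \<Rightarrow> (nat list \<Rightarrow> nat list \<Rightarrow> complex)" where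
  "Cst T C s t = (\<lambda>x y. if (\<forall>r<T. r \<noteq> s \<and> r \<noteq> t \<longrightarrow> x ! r = y ! r)
                        then C (x ! s, x ! t) (y ! s, y ! t) else 0)"

definition Mop :: "nat \<Rightarrow> (nat \<times> nat \<Rightarrow> nat \<times> nat \<Rightarrow> complex) \<Rightarrow> nat \<Rightarrow> (nat list \<Rightarrow> nat list \<Rightarrow> complex)" where
  "Mop T C t = (\<lambda>x y. (1 / (of_nat T)\<^sup>2) * (\<Sum>s\<in>{..<T} - {t}. Cst T C s t x y))"

definition Fswap :: "nat \<Rightarrow> (nat list \<times> nat list \<Rightarrow> nat list \<times> nat list \<Rightarrow> complex)" where
  "Fswap t = (\<lambda>(x, x') (y, y'). if x = y[t := y' ! t] \<and> x' = y'[t := y ! t] then 1 else 0)"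

text \<open>rho_1 (x) ... (x) rho_T (components indexed 0..T-1).\<close>
definition tensor_states :: "nat \<Rightarrow> (nat \<Rightarrow> nat \<Rightarrow> nat \<Rightarrow> complex) \<Rightarrow> (nat list \<Rightarrow> nat list \<Rightarrow> complex)" where
  "tensor_states T \<rho>s = (\<lambda>x y. \<Prod>t<T. \<rho>s t (x ! t) (y ! t))"

end

theory Submission
  imports Defs "Jordan_Normal_Form.Determinant" "HOL-Analysis.Convex"
begin

text \<open>Write \<open>\<rho>'\<^sub>r\<close> for \<open>\<rho>\<^sub>r\<close> in the eigenbasis of \<open>\<sigma>\<close>, \<open>w(i,j) = 2/(q i + q j)\<close> and
  \<open>g(s,t) = \<Sum>\<^sub>i\<^sub>,\<^sub>j w(i,j) \<rho>'\<^sub>s(i,j) \<rho>'\<^sub>t(j,i)\<close> (\<open>C_pair\<close> below).  Then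
  \<open>g(t,t) = E\<^bsub>\<rho>\<^sub>t\<otimes>\<rho>\<^sub>t\<^esub>[C]\<close> and \<open>\<Sum>\<^sub>s\<^sub>,\<^sub>t g(s,t) = T\<^sup>2(\<mu> + 1)\<close>.  Since \<open>M\<^sub>t\<close>, \<open>F\<^sub>t\<close> and
  \<open>\<rho>\<^sub>1 \<otimes> \<dots> \<otimes> \<rho>\<^sub>T\<close> are sums of product operators, the \<open>t\<close>-th term of the left-hand side
  factorises over the tensor components: it is \<open>T\<^sup>-\<^sup>4\<close> times a double sum over \<open>s, s' \<noteq> t\<close>
  whose off-diagonal terms are \<open>g(s,t) g(s',t)\<close> and whose diagonal terms (\<open>C_triple\<close>)
  dominate \<open>g(s,t)\<^sup>2\<close> by the Cauchy--Schwarz inequality for the positive form of \<open>\<rho>'\<^sub>s\<close>.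
  Hence the \<open>t\<close>-th term is at least \<open>T\<^sup>-\<^sup>4 (\<Sum>\<^sub>s\<^sub>\<noteq>\<^sub>t g(s,t))\<^sup>2\<close>, and Cauchy--Schwarz over \<open>t\<close>
  bounds the left-hand side below by \<open>(T\<^sup>2(\<mu> + 1) - P)\<^sup>2 / T\<^sup>5 \<ge> 1/T - 2P/T\<^sup>3\<close>, where
  \<open>P = \<Sum>\<^sub>t g(t,t)\<close> and \<open>\<mu> \<ge> 0\<close>.  So the bound holds even without the error term, for
  every \<open>K \<ge> 0\<close>.\<close>

section \<open>Operators on finite index sets\<close>

type_synonym cmatrix = "nat \<Rightarrow> nat \<Rightarrow> complex"
type_synonym cmatrix2 = "nat \<times> nat \<Rightarrow> nat \<times> nat \<Rightarrow> complex"

definition agree_on :: "'i set \<Rightarrow> ('i \<Rightarrow> 'i \<Rightarrow> complex) \<Rightarrow> ('i \<Rightarrow> 'i \<Rightarrow> complex) \<Rightarrow> bool" where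
  "agree_on I A B \<longleftrightarrow> (\<forall>x\<in>I. \<forall>y\<in>I. A x y = B x y)"

lemma agree_on_refl [simp]: "agree_on I A A"
  by (simp add: agree_on_def)

lemma agree_on_trans: "agree_on I A B \<Longrightarrow> agree_on I B C \<Longrightarrow> agree_on I A C"
  by (simp add: agree_on_def)

lemma mmul_agree_on: "agree_on I A A' \<Longrightarrow> agree_on I B B' \<Longrightarrow> agree_on I (mmul I A B) (mmul I A' B')"
  unfolding agree_on_def mmul_def by (auto intro!: sum.cong)

lemma expect_agree_on: "agree_on I A A' \<Longrightarrow> agree_on I B B' \<Longrightarrow> expect I A B = expect I A' B'"
  unfolding agree_on_def expect_def mtrace_def mmul_def by (auto intro!: sum.cong)

lemma mmul_sum_left:
  "mmul I (\<lambda>x y. \<Sum>a\<in>K. c a * A a x y) B = (\<lambda>x y. \<Sum>a\<in>K. c a * mmul I (A a) B x y)"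
  unfolding mmul_def by (auto simp: sum_distrib_right sum_distrib_left mult.assoc intro!: ext sum.swap)

lemma mmul_sum_right:
  "mmul I B (\<lambda>x y. \<Sum>a\<in>K. c a * A a x y) = (\<lambda>x y. \<Sum>a\<in>K. c a * mmul I B (A a) x y)"
  unfolding mmul_def
  by (auto simp: sum_distrib_right sum_distrib_left mult.assoc mult.left_commute intro!: ext sum.swap)

lemma expect_sum_right:
  "expect I B (\<lambda>x y. \<Sum>a\<in>K. c a * A a x y) = (\<Sum>a\<in>K. c a * expect I B (A a))"
  unfolding expect_def mtrace_def mmul_sum_right by (simp add: sum_distrib_left sum.swap[of _ I])

lemma mmul_assoc: "mmul I (mmul I A B) C = mmul I A (mmul I B C)"
  unfolding mmul_def by (auto intro!: ext simp: sum_distrib_left sum_distrib_right mult.assoc intro: sum.swap)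

lemma mmul_tens: "mmul (I \<times> J) (tens A B) (tens A' B') = tens (mmul I A A') (mmul J B B')"
  unfolding mmul_def tens_def
  by (auto intro!: ext simp: sum.cartesian_product' sum_product mult_ac)

lemma expect_tens: "expect (I \<times> J) (tens \<rho> \<rho>') (tens A B) = expect I \<rho> A * expect J \<rho>' B"
  unfolding expect_def mtrace_def mmul_tens by (simp add: tens_def sum.cartesian_product' sum_product)

lemma mult_idop [simp]:
  "a * idop x y = (if x = y then a else 0)" "idop x y * a = (if x = y then a else 0)"
  by (simp_all add: idop_def)

lemma cnj_idop [simp]: "cnj (idop x y) = idop x y"
  by (simp add: idop_def)

lemma mmul_idop_right: "finite I \<Longrightarrow> agree_on I (mmul I A idop) A"
  unfolding agree_on_def mmul_def by simp

lemma mmul_idop_left: "finite I \<Longrightarrow> agree_on I (mmul I idop A) A"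
  unfolding agree_on_def mmul_def by simp

lemma expect_mmul_idop_right: "finite I \<Longrightarrow> expect I \<rho> (mmul I A idop) = expect I \<rho> A"
  by (intro expect_agree_on agree_on_refl mmul_idop_right)

lemma expect_mmul_idop_left: "finite I \<Longrightarrow> expect I \<rho> (mmul I idop A) = expect I \<rho> A"
  by (intro expect_agree_on agree_on_refl mmul_idop_left)

lemma expect_idop: "finite I \<Longrightarrow> expect I \<rho> idop = mtrace I \<rho>"
  using mmul_idop_right[of I \<rho>] unfolding agree_on_def expect_def mtrace_def by simp

lemma mtrace_state: "is_state d \<rho> \<Longrightarrow> mtrace {..<d} \<rho> = 1"
  unfolding is_state_def mtrace_def by blast

lemma state_conj: "is_state d \<rho> \<Longrightarrow> a < d \<Longrightarrow> b < d \<Longrightarrow> cnj (\<rho> a b) = \<rho> b a"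
  unfolding is_state_def by (metis complex_cnj_cnj)

lemma prod_indicator:
  "finite A \<Longrightarrow> (\<Prod>r\<in>A. if P r then 1 else 0 :: 'a::comm_semiring_1) = (if \<forall>r\<in>A. P r then 1 else 0)"
  by (induction A rule: finite_induct) auto

lemma sum_swap_pairs:
  "(\<Sum>x\<in>A. \<Sum>y\<in>B. \<Sum>a\<in>C. \<Sum>b\<in>D. f x y a b) = (\<Sum>a\<in>C. \<Sum>b\<in>D. \<Sum>x\<in>A. \<Sum>y\<in>B. (f x y a b :: 'c::comm_monoid_add))"
proof -
  have "(\<Sum>x\<in>A. \<Sum>y\<in>B. \<Sum>a\<in>C. \<Sum>b\<in>D. f x y a b) = (\<Sum>x\<in>A. \<Sum>a\<in>C. \<Sum>y\<in>B. \<Sum>b\<in>D. f x y a b)"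
    by (rule sum.cong[OF refl], rule sum.swap)
  also have "\<dots> = (\<Sum>x\<in>A. \<Sum>a\<in>C. \<Sum>b\<in>D. \<Sum>y\<in>B. f x y a b)"
    by (rule sum.cong[OF refl], rule sum.cong[OF refl], rule sum.swap)
  also have "\<dots> = (\<Sum>a\<in>C. \<Sum>x\<in>A. \<Sum>b\<in>D. \<Sum>y\<in>B. f x y a b)"
    by (rule sum.swap)
  also have "\<dots> = (\<Sum>a\<in>C. \<Sum>b\<in>D. \<Sum>x\<in>A. \<Sum>y\<in>B. f x y a b)"
    by (rule sum.cong[OF refl], rule sum.swap)
  finally show ?thesis .
qed

text \<open>Completeness follows from orthonormality because a left inverse of a square matrix is
  also a right inverse.\<close>
lemma orthonormal_basis_complete:
  assumes "orthonormal_basis d e" "a < d" "b < d"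
  shows "(\<Sum>i<d. e i a * cnj (e i b)) = (if a = b then 1 else 0)"
proof -
  define U where "U = mat d d (\<lambda>(a, i). e i a)"
  define V where "V = mat d d (\<lambda>(i, a). cnj (e i a))"
  have U: "U \<in> carrier_mat d d" and V: "V \<in> carrier_mat d d" by (auto simp: U_def V_def)
  have "V * U = 1\<^sub>m d"
  proof (rule eq_matI)
    fix i j assume ij: "i < dim_row (1\<^sub>m d)" "j < dim_col (1\<^sub>m d)"
    have "(V * U) $$ (i, j) = (\<Sum>a<d. cnj (e i a) * e j a)"
      using ij by (simp add: U_def V_def scalar_prod_def lessThan_atLeast0)
    also have "\<dots> = 1\<^sub>m d $$ (i, j)" using assms(1) ij unfolding orthonormal_basis_def by auto
    finally show "(V * U) $$ (i, j) = 1\<^sub>m d $$ (i, j)" .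
  qed (auto simp: U_def V_def)
  then have "U * V = 1\<^sub>m d" using mat_mult_left_right_inverse[OF V U] by blast
  then have "(U * V) $$ (a, b) = 1\<^sub>m d $$ (a, b)" by simp
  then show ?thesis using assms(2,3) by (simp add: U_def V_def scalar_prod_def lessThan_atLeast0)
qed

definition ketbra :: "cmatrix \<Rightarrow> nat \<Rightarrow> nat \<Rightarrow> cmatrix" where
  "ketbra e i j = (\<lambda>a c. e i a * cnj (e j c))"

definition basis_entry :: "nat \<Rightarrow> cmatrix \<Rightarrow> cmatrix \<Rightarrow> nat \<Rightarrow> nat \<Rightarrow> complex" where
  "basis_entry d e \<rho> i j = (\<Sum>a<d. \<Sum>b<d. cnj (e i a) * \<rho> a b * e j b)"

lemma expect_ketbra: "expect {..<d} \<rho> (ketbra e i j) = basis_entry d e \<rho> j i"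
  unfolding expect_def mtrace_def mmul_def ketbra_def basis_entry_def by (simp add: mult_ac)

lemma expect_mmul_ketbra:
  assumes "orthonormal_basis d e" "i < d" "l < d"
  shows "expect {..<d} \<rho> (mmul {..<d} (ketbra e j i) (ketbra e l k))
       = (if i = l then basis_entry d e \<rho> k j else 0)"
proof -
  have "expect {..<d} \<rho> (mmul {..<d} (ketbra e j i) (ketbra e l k))
      = (\<Sum>a<d. \<Sum>b<d. \<rho> a b * e j b * cnj (e k a) * (\<Sum>c<d. cnj (e i c) * e l c))"
    unfolding expect_def mtrace_def mmul_def ketbra_def by (simp add: sum_distrib_left mult_ac)
  then show ?thesis
    using assms unfolding orthonormal_basis_def basis_entry_def by (simp add: mult_ac)
qed

lemma basis_entry_conj:
  assumes "is_state d \<rho>"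
  shows "cnj (basis_entry d e \<rho> x y) = basis_entry d e \<rho> y x"
proof -
  have "cnj (basis_entry d e \<rho> x y) = (\<Sum>a<d. \<Sum>b<d. e x a * \<rho> b a * cnj (e y b))"
    unfolding basis_entry_def cnj_sum using state_conj[OF assms] by (intro sum.cong refl) simp
  also have "\<dots> = (\<Sum>b<d. \<Sum>a<d. e x a * \<rho> b a * cnj (e y b))"
    by (rule sum.swap)
  also have "\<dots> = basis_entry d e \<rho> y x"
    unfolding basis_entry_def by (simp add: mult_ac)
  finally show ?thesis .
qed

lemma basis_entry_psd:
  assumes "is_state d \<rho>"
  shows "0 \<le> Re (\<Sum>x<d. \<Sum>y<d. cnj (v x) * basis_entry d e \<rho> x y * v y)"
proof -
  define w where "w a = (\<Sum>x<d. e x a * v x)" for a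
  have "(\<Sum>x<d. \<Sum>y<d. cnj (v x) * basis_entry d e \<rho> x y * v y)
      = (\<Sum>x<d. \<Sum>y<d. \<Sum>a<d. \<Sum>b<d. cnj (v x) * cnj (e x a) * \<rho> a b * e y b * v y)"
    unfolding basis_entry_def by (simp add: sum_distrib_left sum_distrib_right mult_ac)
  also have "\<dots> = (\<Sum>a<d. \<Sum>b<d. \<Sum>x<d. \<Sum>y<d. cnj (v x) * cnj (e x a) * \<rho> a b * e y b * v y)"
    by (rule sum_swap_pairs)
  also have "\<dots> = (\<Sum>a<d. \<Sum>b<d. cnj (w a) * \<rho> a b * w b)"
    unfolding w_def by (simp add: sum_distrib_left sum_distrib_right mult_ac)
  moreover have "0 \<le> Re (\<Sum>a<d. \<Sum>b<d. cnj (w a) * \<rho> a b * w b)"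
    using assms unfolding is_state_def by blast
  ultimately show ?thesis by simp
qed

lemma basis_entry_trace:
  assumes onb: "orthonormal_basis d e" and tr: "mtrace {..<d} \<rho> = 1"
  shows "(\<Sum>i<d. basis_entry d e \<rho> i i) = 1"
proof -
  have "(\<Sum>i<d. basis_entry d e \<rho> i i) = (\<Sum>a<d. \<Sum>i<d. \<Sum>b<d. cnj (e i a) * \<rho> a b * e i b)"
    unfolding basis_entry_def by (rule sum.swap)
  also have "\<dots> = (\<Sum>a<d. \<Sum>b<d. \<Sum>i<d. cnj (e i a) * \<rho> a b * e i b)"
    by (rule sum.cong[OF refl], rule sum.swap)
  also have "\<dots> = (\<Sum>a<d. \<Sum>b<d. \<rho> a b * (\<Sum>i<d. e i b * cnj (e i a)))"
    by (simp add: sum_distrib_left mult_ac)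
  also have "\<dots> = (\<Sum>a<d. \<Sum>b<d. if b = a then \<rho> a b else 0)"
    by (intro sum.cong refl) (simp add: orthonormal_basis_complete[OF onb])
  finally show ?thesis using tr by (simp add: mtrace_def)
qed

lemma basis_entry_average:
  "basis_entry d e (\<lambda>a b. (1 / of_nat T) * (\<Sum>t<T. \<rho>s t a b)) i j
   = (1 / of_nat T) * (\<Sum>t<T. basis_entry d e (\<rho>s t) i j)"
proof -
  have "basis_entry d e (\<lambda>a b. (1 / of_nat T) * (\<Sum>t<T. \<rho>s t a b)) i j
      = (1 / of_nat T) * (\<Sum>a<d. \<Sum>b<d. \<Sum>t<T. cnj (e i a) * \<rho>s t a b * e j b)"
    unfolding basis_entry_def by (simp add: sum_distrib_left sum_distrib_right mult_ac)
  also have "(\<Sum>a<d. \<Sum>b<d. \<Sum>t<T. cnj (e i a) * \<rho>s t a b * e j b)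
      = (\<Sum>t<T. \<Sum>a<d. \<Sum>b<d. cnj (e i a) * \<rho>s t a b * e j b)"
    by (simp add: sum.swap[of _ "{..<T}"])
  finally show ?thesis
    unfolding basis_entry_def .
qed

section \<open>Product operators on the doubled tensor power\<close>

lemma idx_Suc: "idx d (Suc T) = (\<lambda>(a, xs). a # xs) ` ({..<d} \<times> idx d T)"
  unfolding idx_def by (force simp: length_Suc_conv image_iff)

lemma sum_idx_prod_nth:
  "(\<Sum>x\<in>idx d T. \<Prod>r<T. f r (x ! r)) = (\<Prod>r<T. \<Sum>a<d. (f r a :: 'a::comm_semiring_1))"
proof (induction T arbitrary: f)
  case 0
  have "idx d 0 = {[]}" by (auto simp: idx_def)
  then show ?case by simp
next
  case (Suc T)
  have inj: "inj_on (\<lambda>(a, xs). a # xs) ({..<d} \<times> idx d T)" by (auto simp: inj_on_def)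
  have "(\<Sum>x\<in>idx d (Suc T). \<Prod>r<Suc T. f r (x ! r))
      = (\<Sum>(a, xs)\<in>{..<d} \<times> idx d T. f 0 a * (\<Prod>r<T. f (Suc r) (xs ! r)))"
    unfolding idx_Suc sum.reindex[OF inj]
    by (intro sum.cong refl) (auto simp: prod.lessThan_Suc_shift simp del: prod.lessThan_Suc)
  also have "\<dots> = (\<Sum>a<d. f 0 a * (\<Sum>xs\<in>idx d T. \<Prod>r<T. f (Suc r) (xs ! r)))"
    by (simp add: sum.cartesian_product[symmetric] sum_distrib_left)
  also have "\<dots> = (\<Sum>a<d. f 0 a) * (\<Sum>xs\<in>idx d T. \<Prod>r<T. f (Suc r) (xs ! r))"
    by (simp add: sum_distrib_right)
  also have "\<dots> = (\<Prod>r<Suc T. \<Sum>a<d. f r a)"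
    by (simp only: Suc.IH[of "\<lambda>r. f (Suc r)"] prod.lessThan_Suc_shift)
  finally show ?case .
qed

abbreviation idx2 :: "nat \<Rightarrow> (nat \<times> nat) set" where
  "idx2 d \<equiv> {..<d} \<times> {..<d}"

lemma sum_idx_pair_prod_nth:
  "(\<Sum>X\<in>idx d T \<times> idx d T. \<Prod>r<T. f r (fst X ! r, snd X ! r))
   = (\<Prod>r<T. \<Sum>p\<in>idx2 d. (f r p :: 'a::comm_semiring_1))"
proof -
  have "(\<Sum>X\<in>idx d T \<times> idx d T. \<Prod>r<T. f r (fst X ! r, snd X ! r))
      = (\<Sum>x\<in>idx d T. \<Sum>x'\<in>idx d T. \<Prod>r<T. f r (x ! r, x' ! r))"
    by (simp add: sum.cartesian_product split_beta)
  also have "\<dots> = (\<Sum>x\<in>idx d T. \<Prod>r<T. \<Sum>b<d. f r (x ! r, b))"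
    by (subst sum_idx_prod_nth) simp
  also have "\<dots> = (\<Prod>r<T. \<Sum>a<d. \<Sum>b<d. f r (a, b))"
    by (subst sum_idx_prod_nth) simp
  finally show ?thesis by (simp add: sum.cartesian_product)
qed

lemma prod_idop_nth:
  "length x = T \<Longrightarrow> length y = T \<Longrightarrow> (\<Prod>r<T. idop (x ! r) (y ! r)) = idop x y"
  unfolding idop_def by (subst prod_indicator) (auto simp: list_eq_iff_nth_eq)

text \<open>\<open>tensor_pairs T P\<close> is \<open>P\<^sub>0 \<otimes> \<dots> \<otimes> P\<^bsub>T-1\<^esub>\<close> on \<open>(\<complex>\<^sup>d \<otimes> \<complex>\<^sup>d)\<^sup>\<otimes>\<^sup>T\<close>, regrouped as an
  operator on \<open>(\<complex>\<^sup>d)\<^sup>\<otimes>\<^sup>T \<otimes> (\<complex>\<^sup>d)\<^sup>\<otimes>\<^sup>T\<close>.\<close>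
definition tensor_pairs ::
    "nat \<Rightarrow> (nat \<Rightarrow> cmatrix2) \<Rightarrow> (nat list \<times> nat list \<Rightarrow> nat list \<times> nat list \<Rightarrow> complex)" where
  "tensor_pairs T P = (\<lambda>(x, x') (y, y'). \<Prod>r<T. P r (x ! r, x' ! r) (y ! r, y' ! r))"

lemma mmul_tensor_pairs:
  "mmul (idx d T \<times> idx d T) (tensor_pairs T P) (tensor_pairs T Q) = tensor_pairs T (\<lambda>r. mmul (idx2 d) (P r) (Q r))"
proof (intro ext)
  fix X Y :: "nat list \<times> nat list"
  obtain x x' y y' where XY: "X = (x, x')" "Y = (y, y')" by (cases X, cases Y)
  show "mmul (idx d T \<times> idx d T) (tensor_pairs T P) (tensor_pairs T Q) X Y
      = tensor_pairs T (\<lambda>r. mmul (idx2 d) (P r) (Q r)) X Y"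
    unfolding XY mmul_def tensor_pairs_def
    using sum_idx_pair_prod_nth[where f = "\<lambda>r p. P r (x ! r, x' ! r) p * Q r p (y ! r, y' ! r)"]
    by (simp add: case_prod_unfold prod.distrib)
qed

lemma expect_tensor_pairs:
  "expect (idx d T \<times> idx d T) (tensor_pairs T P) (tensor_pairs T Q) = (\<Prod>r<T. expect (idx2 d) (P r) (Q r))"
  unfolding expect_def mtrace_def mmul_tensor_pairs
  using sum_idx_pair_prod_nth[where f = "\<lambda>r p. mmul (idx2 d) (P r) (Q r) p p"]
  by (simp add: tensor_pairs_def case_prod_unfold)

lemma tens_tensor_states:
  "tens (tensor_states T \<rho>s) (tensor_states T \<rho>s') = tensor_pairs T (\<lambda>r. tens (\<rho>s r) (\<rho>s' r))"
  unfolding tens_def tensor_states_def tensor_pairs_def by (auto intro!: ext simp: prod.distrib)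

definition swap_op :: "cmatrix2" where
  "swap_op = (\<lambda>(a, a') (c, c'). if a = c' \<and> a' = c then 1 else 0)"

definition Fswap_factor :: "nat \<Rightarrow> nat \<Rightarrow> cmatrix2" where
  "Fswap_factor t r = (if r = t then swap_op else idop)"

lemma Fswap_tensor_pairs:
  assumes "t < T"
  shows "agree_on (idx d T \<times> idx d T) (Fswap t) (tensor_pairs T (Fswap_factor t))"
  unfolding agree_on_def
proof (intro ballI)
  fix X Y assume X: "X \<in> idx d T \<times> idx d T" and Y: "Y \<in> idx d T \<times> idx d T"
  obtain x x' y y' where XY: "X = (x, x')" "Y = (y, y')" by (cases X, cases Y)
  have len: "length x = T" "length x' = T" "length y = T" "length y' = T"
    using X Y XY by (auto simp: idx_def)
  have "tensor_pairs T (Fswap_factor t) X Y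
      = (\<Prod>r<T. if (if r = t then x ! r = y' ! r \<and> x' ! r = y ! r else x ! r = y ! r \<and> x' ! r = y' ! r)
                then 1 else 0)"
    unfolding XY tensor_pairs_def Fswap_factor_def swap_op_def idop_def by (auto intro!: prod.cong)
  also have "\<dots> = Fswap t X Y"
    unfolding XY Fswap_def using len assms
    by (subst prod_indicator) (auto simp: list_eq_iff_nth_eq nth_list_update)
  finally show "Fswap t X Y = tensor_pairs T (Fswap_factor t) X Y" by simp
qed

definition bures_weight :: "(nat \<Rightarrow> real) \<Rightarrow> nat \<Rightarrow> nat \<Rightarrow> complex" where
  "bures_weight q i j = complex_of_real (2 / (q i + q j))"

lemma bures_weight_commute: "bures_weight q i j = bures_weight q j i"
  unfolding bures_weight_def by (simp add: add.commute)

lemma bures_weight_cnj [simp]: "cnj (bures_weight q i j) = bures_weight q i j"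
  by (simp add: bures_weight_def)

lemma Cop_eq:
  "Cop d e q (a, b) (c, c') = (\<Sum>i<d. \<Sum>j<d. bures_weight q i j * (e j a * e i b * cnj (e i c) * cnj (e j c')))"
  unfolding Cop_def bures_weight_def by (simp add: field_simps)

text \<open>The factor of the product operator \<open>|e\<^sub>j\<rangle>\<langle>e\<^sub>i|\<^sub>s \<otimes> |e\<^sub>i\<rangle>\<langle>e\<^sub>j|\<^sub>t\<close> at component \<open>r\<close>;
  \<open>C\<^sub>s\<^sub>t\<close> is the \<open>bures_weight\<close>-combination of these.\<close>
definition Cst_factor :: "cmatrix \<Rightarrow> nat \<Rightarrow> nat \<Rightarrow> nat \<Rightarrow> nat \<Rightarrow> nat \<Rightarrow> cmatrix" where
  "Cst_factor e s t i j r = (if r = s then ketbra e j i else if r = t then ketbra e i j else idop)"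

lemma Cst_tensor:
  assumes st: "s \<noteq> t" "s < T" "t < T" and len: "length x = T" "length y = T"
  shows "Cst T (Cop d e q) s t x y
       = (\<Sum>i<d. \<Sum>j<d. bures_weight q i j * (\<Prod>r<T. Cst_factor e s t i j r (x ! r) (y ! r)))"
proof -
  have split: "(\<Prod>r<T. f r) = f s * f t * (\<Prod>r\<in>{..<T} - {s} - {t}. f r)" for f :: "nat \<Rightarrow> complex"
    using st by (simp add: prod.remove[of _ s] prod.remove[of _ t] mult.assoc)
  have rest: "(\<Prod>r\<in>{..<T} - {s} - {t}. Cst_factor e s t i j r (x ! r) (y ! r))
      = (if \<forall>r<T. r \<noteq> s \<and> r \<noteq> t \<longrightarrow> x ! r = y ! r then 1 else 0)" for i j
  proof -
    have "(\<Prod>r\<in>{..<T} - {s} - {t}. Cst_factor e s t i j r (x ! r) (y ! r))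
        = (\<Prod>r\<in>{..<T} - {s} - {t}. if x ! r = y ! r then 1 else 0)"
      by (intro prod.cong) (auto simp: Cst_factor_def idop_def)
    then show ?thesis by (simp add: prod_indicator) blast
  qed
  show ?thesis
    unfolding Cst_def Cop_eq split rest
    using st by (auto simp: Cst_factor_def ketbra_def sum_distrib_left mult_ac intro!: sum.cong)
qed

definition Mop_index :: "nat \<Rightarrow> nat \<Rightarrow> nat \<Rightarrow> (nat \<times> nat \<times> nat) set" where
  "Mop_index T d t = ({..<T} - {t}) \<times> {..<d} \<times> {..<d}"

definition Mop_coeff :: "nat \<Rightarrow> (nat \<Rightarrow> real) \<Rightarrow> nat \<times> nat \<times> nat \<Rightarrow> complex" where
  "Mop_coeff T q = (\<lambda>(s, i, j). 1 / (of_nat T)\<^sup>2 * bures_weight q i j)"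

definition Mop_factor :: "cmatrix \<Rightarrow> nat \<Rightarrow> nat \<times> nat \<times> nat \<Rightarrow> nat \<Rightarrow> cmatrix2" where
  "Mop_factor e t = (\<lambda>(s, i, j) r. tens (Cst_factor e s t i j r) idop)"

lemma Mop_tensor_pairs:
  assumes "t < T"
  shows "agree_on (idx d T \<times> idx d T) (tens (Mop T (Cop d e q) t) idop)
           (\<lambda>X Y. \<Sum>a\<in>Mop_index T d t. Mop_coeff T q a * tensor_pairs T (Mop_factor e t a) X Y)"
  unfolding agree_on_def
proof (intro ballI)
  fix X Y assume X: "X \<in> idx d T \<times> idx d T" and Y: "Y \<in> idx d T \<times> idx d T"
  obtain x x' y y' where XY: "X = (x, x')" "Y = (y, y')" by (cases X, cases Y)
  have len: "length x = T" "length x' = T" "length y = T" "length y' = T"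
    using X Y XY by (auto simp: idx_def)
  have factor: "tensor_pairs T (Mop_factor e t (s, i, j)) X Y
      = (\<Prod>r<T. Cst_factor e s t i j r (x ! r) (y ! r)) * idop x' y'" for s i j
    unfolding XY tensor_pairs_def Mop_factor_def tens_def using prod_idop_nth[OF len(2,4)]
    by (simp add: prod.distrib del: mult_idop)
  have "(\<Sum>a\<in>Mop_index T d t. Mop_coeff T q a * tensor_pairs T (Mop_factor e t a) X Y)
     = (\<Sum>s\<in>{..<T} - {t}. \<Sum>i<d. \<Sum>j<d. 1 / (of_nat T)\<^sup>2 * bures_weight q i j
          * ((\<Prod>r<T. Cst_factor e s t i j r (x ! r) (y ! r)) * idop x' y'))"
    unfolding Mop_index_def by (simp add: sum.cartesian_product' Mop_coeff_def factor)
  also have "\<dots> = tens (Mop T (Cop d e q) t) idop X Y"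
    unfolding XY tens_def Mop_def using assms len
    by (auto simp: Cst_tensor sum_distrib_left sum_distrib_right sum_divide_distrib mult_ac simp del: mult_idop intro!: sum.cong)
  finally show "tens (Mop T (Cop d e q) t) idop X Y
      = (\<Sum>a\<in>Mop_index T d t. Mop_coeff T q a * tensor_pairs T (Mop_factor e t a) X Y)" by simp
qed

definition swap_expect :: "nat \<Rightarrow> nat \<Rightarrow> cmatrix2 \<Rightarrow> (nat \<Rightarrow> cmatrix) \<Rightarrow> nat \<Rightarrow> complex" where
  "swap_expect d T C \<rho>s t =
     (let J = idx d T \<times> idx d T; \<rho>T = tensor_states T \<rho>s; MI = tens (Mop T C t) idop
      in expect J (tens \<rho>T \<rho>T) (mmul J (mmul J (mmul J MI (Fswap t)) MI) (Fswap t)))"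

definition site_factor ::
    "nat \<Rightarrow> cmatrix \<Rightarrow> nat \<Rightarrow> cmatrix \<Rightarrow> nat \<Rightarrow> nat \<times> nat \<times> nat \<Rightarrow> nat \<times> nat \<times> nat \<Rightarrow> complex" where
  "site_factor d e t \<rho> r a b = expect (idx2 d) (tens \<rho> \<rho>)
     (mmul (idx2 d) (mmul (idx2 d) (mmul (idx2 d) (Mop_factor e t a r) (Fswap_factor t r)) (Mop_factor e t b r))
        (Fswap_factor t r))"

lemma swap_expect_expand:
  assumes "t < T"
  shows "swap_expect d T (Cop d e q) \<rho>s t
   = (\<Sum>a\<in>Mop_index T d t. Mop_coeff T q a *
       (\<Sum>b\<in>Mop_index T d t. Mop_coeff T q b * (\<Prod>r<T. site_factor d e t (\<rho>s r) r a b)))"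
proof -
  let ?J = "idx d T \<times> idx d T"
  let ?M = "\<lambda>X Y. \<Sum>a\<in>Mop_index T d t. Mop_coeff T q a * tensor_pairs T (Mop_factor e t a) X Y"
  have M: "agree_on ?J (tens (Mop T (Cop d e q) t) idop) ?M" by (rule Mop_tensor_pairs[OF assms])
  have F: "agree_on ?J (Fswap t) (tensor_pairs T (Fswap_factor t))" by (rule Fswap_tensor_pairs[OF assms])
  have "swap_expect d T (Cop d e q) \<rho>s t
     = expect ?J (tensor_pairs T (\<lambda>r. tens (\<rho>s r) (\<rho>s r)))
         (mmul ?J (mmul ?J (mmul ?J ?M (tensor_pairs T (Fswap_factor t))) ?M) (tensor_pairs T (Fswap_factor t)))"
    unfolding swap_expect_def Let_def tens_tensor_states
    by (intro expect_agree_on agree_on_refl mmul_agree_on M F)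
  then show ?thesis
    by (simp add: mmul_sum_left mmul_sum_right expect_sum_right mmul_tensor_pairs expect_tensor_pairs
        site_factor_def)
qed

lemma mmul_swap_op_right:
  "mmul (idx2 d) A swap_op = (\<lambda>x y. if (snd y, fst y) \<in> idx2 d then A x (snd y, fst y) else 0)"
proof (intro ext)
  fix x y :: "nat \<times> nat"
  have "mmul (idx2 d) A swap_op x y = (\<Sum>z\<in>idx2 d. if z = (snd y, fst y) then A x z else 0)"
    unfolding mmul_def swap_op_def by (intro sum.cong) (auto simp: split_beta)
  then show "mmul (idx2 d) A swap_op x y = (if (snd y, fst y) \<in> idx2 d then A x (snd y, fst y) else 0)"
    by (simp add: sum.delta')
qed

lemma mmul_swap_op_left:
  "mmul (idx2 d) swap_op A = (\<lambda>x y. if (snd x, fst x) \<in> idx2 d then A (snd x, fst x) y else 0)"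
proof (intro ext)
  fix x y :: "nat \<times> nat"
  have "mmul (idx2 d) swap_op A x y = (\<Sum>z\<in>idx2 d. if z = (snd x, fst x) then A z y else 0)"
    unfolding mmul_def swap_op_def by (intro sum.cong) (auto simp: split_beta)
  then show "mmul (idx2 d) swap_op A x y = (if (snd x, fst x) \<in> idx2 d then A (snd x, fst x) y else 0)"
    by (simp add: sum.delta')
qed

lemma swap_op_conj:
  "agree_on (idx2 d) (mmul (idx2 d) swap_op (mmul (idx2 d) (tens Y idop) swap_op)) (tens idop Y)"
  unfolding agree_on_def mmul_swap_op_left mmul_swap_op_right by (auto simp: tens_def idop_def)

lemma expect_tens_swap_conj:
  "expect (idx2 d) (tens \<rho> \<rho>')
     (mmul (idx2 d) (mmul (idx2 d) (mmul (idx2 d) (tens X idop) swap_op) (tens Y idop)) swap_op)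
   = expect {..<d} \<rho> X * expect {..<d} \<rho>' Y"
proof -
  have "expect (idx2 d) (tens \<rho> \<rho>')
      (mmul (idx2 d) (mmul (idx2 d) (mmul (idx2 d) (tens X idop) swap_op) (tens Y idop)) swap_op)
    = expect (idx2 d) (tens \<rho> \<rho>') (mmul (idx2 d) (tens X idop) (tens idop Y))"
    unfolding mmul_assoc by (intro expect_agree_on mmul_agree_on agree_on_refl swap_op_conj)
  then show ?thesis
    by (simp add: mmul_tens expect_tens expect_mmul_idop_left expect_mmul_idop_right)
qed

lemma expect_tens_idop_conj:
  "expect (idx2 d) (tens \<rho> \<rho>')
     (mmul (idx2 d) (mmul (idx2 d) (mmul (idx2 d) (tens X idop) idop) (tens Y idop)) idop)
   = expect {..<d} \<rho> (mmul {..<d} X Y) * mtrace {..<d} \<rho>'"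
proof -
  have "expect (idx2 d) (tens \<rho> \<rho>')
      (mmul (idx2 d) (mmul (idx2 d) (mmul (idx2 d) (tens X idop) idop) (tens Y idop)) idop)
    = expect (idx2 d) (tens \<rho> \<rho>') (mmul (idx2 d) (tens X idop) (tens Y idop))"
    unfolding mmul_assoc
    by (intro expect_agree_on mmul_agree_on agree_on_refl agree_on_trans[OF mmul_idop_left mmul_idop_right]) simp_all
  then show ?thesis
    by (simp add: mmul_tens expect_tens expect_mmul_idop_left expect_idop)
qed

lemma site_factor_eval:
  assumes onb: "orthonormal_basis d e" and st: "s \<noteq> t" "s' \<noteq> t"
    and ijkl: "i < d" "j < d" "k < d" "l < d" and tr: "mtrace {..<d} \<rho> = 1"
  shows "site_factor d e t \<rho> r (s, i, j) (s', k, l) =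
    (if r = t then basis_entry d e \<rho> j i * basis_entry d e \<rho> l k
     else if r = s \<and> r = s' then (if i = l then basis_entry d e \<rho> k j else 0)
     else if r = s then basis_entry d e \<rho> i j
     else if r = s' then basis_entry d e \<rho> k l
     else 1)"
proof (cases "r = t")
  case True
  then show ?thesis
    using st unfolding site_factor_def Mop_factor_def Fswap_factor_def
    by (simp add: expect_tens_swap_conj Cst_factor_def expect_ketbra)
next
  case False
  then have "site_factor d e t \<rho> r (s, i, j) (s', k, l)
      = expect {..<d} \<rho> (mmul {..<d} (Cst_factor e s t i j r) (Cst_factor e s' t k l r))"
    using tr unfolding site_factor_def Mop_factor_def Fswap_factor_def by (simp add: expect_tens_idop_conj)
  then show ?thesis
    using False onb ijkl tr
    by (simp add: Cst_factor_def expect_mmul_ketbra expect_mmul_idop_left expect_mmul_idop_right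
        expect_ketbra expect_idop)
qed

lemma prod_site_factor:
  assumes onb: "orthonormal_basis d e" and t: "t < T" and s: "s < T" "s' < T" and st: "s \<noteq> t" "s' \<noteq> t"
    and ijkl: "i < d" "j < d" "k < d" "l < d" and tr: "\<forall>r<T. mtrace {..<d} (\<rho>s r) = 1"
  shows "(\<Prod>r<T. site_factor d e t (\<rho>s r) r (s, i, j) (s', k, l)) =
     basis_entry d e (\<rho>s t) j i * basis_entry d e (\<rho>s t) l k *
     (if s = s' then (if i = l then basis_entry d e (\<rho>s s) k j else 0)
      else basis_entry d e (\<rho>s s) i j * basis_entry d e (\<rho>s s') k l)"
proof -
  define f where "f r = (if r = t then basis_entry d e (\<rho>s r) j i * basis_entry d e (\<rho>s r) l k
     else if r = s \<and> r = s' then (if i = l then basis_entry d e (\<rho>s r) k j else 0)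
     else if r = s then basis_entry d e (\<rho>s r) i j
     else if r = s' then basis_entry d e (\<rho>s r) k l
     else 1)" for r
  have "(\<Prod>r<T. site_factor d e t (\<rho>s r) r (s, i, j) (s', k, l)) = (\<Prod>r<T. f r)"
    unfolding f_def using assms by (intro prod.cong refl site_factor_eval) auto
  also have "\<dots> = f t * f s * (\<Prod>r\<in>{..<T} - {t} - {s}. f r)"
    using t s st by (simp add: prod.remove[of _ t] prod.remove[of _ s] mult.assoc)
  also have "(\<Prod>r\<in>{..<T} - {t} - {s}. f r) = (if s = s' then 1 else f s')"
  proof (cases "s = s'")
    case True
    then show ?thesis by (simp add: f_def)
  next
    case False
    then show ?thesis using s st by (simp add: prod.remove[of _ s'] f_def)
  qed
  finally show ?thesis using st by (simp add: f_def)
qed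

definition C_pair :: "nat \<Rightarrow> cmatrix \<Rightarrow> (nat \<Rightarrow> real) \<Rightarrow> cmatrix \<Rightarrow> cmatrix \<Rightarrow> complex" where
  "C_pair d e q \<rho> \<rho>' = (\<Sum>i<d. \<Sum>j<d. bures_weight q i j * basis_entry d e \<rho> i j * basis_entry d e \<rho>' j i)"

definition C_triple :: "nat \<Rightarrow> cmatrix \<Rightarrow> (nat \<Rightarrow> real) \<Rightarrow> cmatrix \<Rightarrow> cmatrix \<Rightarrow> complex" where
  "C_triple d e q \<rho> \<rho>' = (\<Sum>i<d. \<Sum>j<d. \<Sum>k<d. bures_weight q i j * bures_weight q k i *
     basis_entry d e \<rho>' j i * basis_entry d e \<rho>' i k * basis_entry d e \<rho> k j)"

lemma sum_weights_site_products:
  "(\<Sum>i<d. \<Sum>j<d. \<Sum>k<d. \<Sum>l<d. bures_weight q i j * bures_weight q k l *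
      (basis_entry d e \<rho>' j i * basis_entry d e \<rho>' l k *
       (if s = s' then (if i = l then basis_entry d e (\<rho>s s) k j else 0)
        else basis_entry d e (\<rho>s s) i j * basis_entry d e (\<rho>s s') k l)))
   = (if s = s' then C_triple d e q (\<rho>s s) \<rho>' else C_pair d e q (\<rho>s s) \<rho>' * C_pair d e q (\<rho>s s') \<rho>')"
proof (cases "s = s'")
  case True
  have "(\<Sum>i<d. \<Sum>j<d. \<Sum>k<d. \<Sum>l<d. bures_weight q i j * bures_weight q k l *
      (basis_entry d e \<rho>' j i * basis_entry d e \<rho>' l k * (if i = l then basis_entry d e (\<rho>s s) k j else 0)))
    = (\<Sum>i<d. \<Sum>j<d. \<Sum>k<d. \<Sum>l<d. if l = i then bures_weight q i j * bures_weight q k i *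
        basis_entry d e \<rho>' j i * basis_entry d e \<rho>' i k * basis_entry d e (\<rho>s s) k j else 0)"
    by (intro sum.cong refl) auto
  with True show ?thesis unfolding C_triple_def by simp
next
  case False
  have "(\<Sum>i<d. \<Sum>j<d. \<Sum>k<d. \<Sum>l<d. bures_weight q i j * bures_weight q k l *
      (basis_entry d e \<rho>' j i * basis_entry d e \<rho>' l k *
       (basis_entry d e (\<rho>s s) i j * basis_entry d e (\<rho>s s') k l)))
    = (\<Sum>i<d. \<Sum>j<d. bures_weight q i j * basis_entry d e (\<rho>s s) i j * basis_entry d e \<rho>' j i
        * C_pair d e q (\<rho>s s') \<rho>')"
    unfolding C_pair_def by (simp add: sum_distrib_left mult_ac)
  also have "\<dots> = C_pair d e q (\<rho>s s) \<rho>' * C_pair d e q (\<rho>s s') \<rho>'"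
    unfolding C_pair_def[of d e q "\<rho>s s"] by (simp add: sum_distrib_right)
  finally show ?thesis using False by simp
qed

lemma swap_expect_eq:
  assumes onb: "orthonormal_basis d e" and t: "t < T" and tr: "\<forall>r<T. mtrace {..<d} (\<rho>s r) = 1"
  shows "swap_expect d T (Cop d e q) \<rho>s t
   = (1 / (of_nat T)\<^sup>2)\<^sup>2 * (\<Sum>s\<in>{..<T} - {t}. \<Sum>s'\<in>{..<T} - {t}.
        if s = s' then C_triple d e q (\<rho>s s) (\<rho>s t)
        else C_pair d e q (\<rho>s s) (\<rho>s t) * C_pair d e q (\<rho>s s') (\<rho>s t))"
proof -
  let ?S = "{..<T} - {t}"
  let ?F = "\<lambda>s i j s' k l. basis_entry d e (\<rho>s t) j i * basis_entry d e (\<rho>s t) l k *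
     (if s = s' then (if i = l then basis_entry d e (\<rho>s s) k j else 0)
      else basis_entry d e (\<rho>s s) i j * basis_entry d e (\<rho>s s') k l)"
  have "swap_expect d T (Cop d e q) \<rho>s t
     = (\<Sum>s\<in>?S. \<Sum>i<d. \<Sum>j<d. (1 / (of_nat T)\<^sup>2 * bures_weight q i j) *
         (\<Sum>s'\<in>?S. \<Sum>k<d. \<Sum>l<d. (1 / (of_nat T)\<^sup>2 * bures_weight q k l) * ?F s i j s' k l))"
    unfolding swap_expect_expand[OF t] Mop_index_def sum.cartesian_product' Mop_coeff_def
    using assms by (intro sum.cong refl) (simp add: prod_site_factor)
  also have "\<dots> = (\<Sum>s\<in>?S. \<Sum>i<d. \<Sum>j<d. \<Sum>s'\<in>?S. (1 / (of_nat T)\<^sup>2)\<^sup>2 *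
      (\<Sum>k<d. \<Sum>l<d. bures_weight q i j * bures_weight q k l * ?F s i j s' k l))"
    by (simp add: sum_distrib_left power2_eq_square mult_ac)
  also have "\<dots> = (\<Sum>s\<in>?S. \<Sum>s'\<in>?S. \<Sum>i<d. \<Sum>j<d. (1 / (of_nat T)\<^sup>2)\<^sup>2 *
      (\<Sum>k<d. \<Sum>l<d. bures_weight q i j * bures_weight q k l * ?F s i j s' k l))"
    by (rule sum.cong[OF refl]) (simp only: sum.swap[of _ _ ?S])
  also have "\<dots> = (1 / (of_nat T)\<^sup>2)\<^sup>2 * (\<Sum>s\<in>?S. \<Sum>s'\<in>?S.
        if s = s' then C_triple d e q (\<rho>s s) (\<rho>s t)
        else C_pair d e q (\<rho>s s) (\<rho>s t) * C_pair d e q (\<rho>s s') (\<rho>s t))"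
    by (simp only: sum_weights_site_products[symmetric] sum_distrib_left)
  finally show ?thesis .
qed

section \<open>Cauchy--Schwarz for the diagonal terms\<close>

definition form_sum :: "nat \<Rightarrow> cmatrix \<Rightarrow> cmatrix \<Rightarrow> cmatrix \<Rightarrow> complex" where
  "form_sum d A u v = (\<Sum>i<d. \<Sum>x<d. \<Sum>y<d. cnj (u i x) * A x y * v i y)"

lemma form_sum_diff:
  "form_sum d A (\<lambda>i x. v i x - c * u i x) (\<lambda>i x. v i x - c * u i x)
   = form_sum d A v v - c * form_sum d A v u - cnj c * form_sum d A u v + c * cnj c * form_sum d A u u"
proof -
  have "cnj (v i x - c * u i x) * A x y * (v i y - c * u i y) =
     cnj (v i x) * A x y * v i y - c * (cnj (v i x) * A x y * u i y) - cnj c * (cnj (u i x) * A x y * v i y)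
     + c * cnj c * (cnj (u i x) * A x y * u i y)" for i x y
    by (simp add: algebra_simps)
  then show ?thesis
    unfolding form_sum_def by (simp only: sum.distrib sum_subtractf sum_distrib_left[symmetric])
qed

lemma form_sum_conj:
  assumes herm: "\<forall>x<d. \<forall>y<d. A y x = cnj (A x y)"
  shows "form_sum d A v u = cnj (form_sum d A u v)"
proof -
  have "cnj (form_sum d A u v) = (\<Sum>i<d. \<Sum>x<d. \<Sum>y<d. u i x * A y x * cnj (v i y))"
    unfolding form_sum_def cnj_sum
  proof (intro sum.cong refl)
    fix i x y assume "x \<in> {..<d}" "y \<in> {..<d}"
    then show "cnj (cnj (u i x) * A x y * v i y) = u i x * A y x * cnj (v i y)"
      using herm[rule_format, of x y] by simp
  qed
  also have "\<dots> = (\<Sum>i<d. \<Sum>y<d. \<Sum>x<d. u i x * A y x * cnj (v i y))"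
    by (rule sum.cong[OF refl], rule sum.swap)
  also have "\<dots> = form_sum d A v u"
    unfolding form_sum_def by (simp add: mult_ac)
  finally show ?thesis by simp
qed

lemma form_sum_nonneg:
  assumes "\<forall>w. 0 \<le> Re (\<Sum>x<d. \<Sum>y<d. cnj (w x) * A x y * w y)"
  shows "0 \<le> Re (form_sum d A v v)"
proof -
  have "Re (form_sum d A v v) = (\<Sum>i<d. Re (\<Sum>x<d. \<Sum>y<d. cnj (v i x) * A x y * v i y))"
    unfolding form_sum_def by (rule Re_sum)
  also have "\<dots> \<ge> 0" using assms by (intro sum_nonneg) blast
  finally show ?thesis .
qed

lemma form_sum_cauchy_schwarz:
  assumes herm: "\<forall>x<d. \<forall>y<d. A y x = cnj (A x y)"
    and psd: "\<forall>w. 0 \<le> Re (\<Sum>x<d. \<Sum>y<d. cnj (w x) * A x y * w y)"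
    and unit: "form_sum d A u u = 1"
  shows "(cmod (form_sum d A u v))\<^sup>2 \<le> Re (form_sum d A v v)"
proof -
  define c where "c = form_sum d A u v"
  have "0 \<le> Re (form_sum d A (\<lambda>i x. v i x - c * u i x) (\<lambda>i x. v i x - c * u i x))"
    by (rule form_sum_nonneg[OF psd])
  also have "form_sum d A (\<lambda>i x. v i x - c * u i x) (\<lambda>i x. v i x - c * u i x) = form_sum d A v v - c * cnj c"
    unfolding form_sum_diff form_sum_conj[OF herm, of v u] unit c_def by simp
  finally show ?thesis
    unfolding c_def by (simp add: complex_mult_cnj cmod_def power2_eq_square[symmetric])
qed

lemma C_pair_as_form:
  "C_pair d e q \<rho> \<rho>'
   = form_sum d (basis_entry d e \<rho>) (\<lambda>i x. idop x i) (\<lambda>i y. bures_weight q y i * basis_entry d e \<rho>' y i)"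
proof -
  have "form_sum d (basis_entry d e \<rho>) (\<lambda>i x. idop x i) (\<lambda>i y. bures_weight q y i * basis_entry d e \<rho>' y i)
      = (\<Sum>i<d. \<Sum>x<d. if x = i then \<Sum>y<d. basis_entry d e \<rho> x y * (bures_weight q y i * basis_entry d e \<rho>' y i)
                        else 0)"
    unfolding form_sum_def by (intro sum.cong refl) simp
  then show ?thesis
    unfolding C_pair_def by (simp add: bures_weight_commute mult_ac)
qed

lemma C_triple_as_form:
  assumes "is_state d \<rho>'"
  shows "C_triple d e q \<rho> \<rho>' = form_sum d (basis_entry d e \<rho>)
     (\<lambda>i y. bures_weight q y i * basis_entry d e \<rho>' y i) (\<lambda>i y. bures_weight q y i * basis_entry d e \<rho>' y i)"
proof -
  have "form_sum d (basis_entry d e \<rho>) (\<lambda>i y. bures_weight q y i * basis_entry d e \<rho>' y i)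
      (\<lambda>i y. bures_weight q y i * basis_entry d e \<rho>' y i)
    = (\<Sum>i<d. \<Sum>x<d. \<Sum>y<d. bures_weight q x i * basis_entry d e \<rho>' i x * basis_entry d e \<rho> x y
        * (bures_weight q y i * basis_entry d e \<rho>' y i))"
    unfolding form_sum_def by (simp add: basis_entry_conj[OF assms])
  also have "\<dots> = (\<Sum>i<d. \<Sum>y<d. \<Sum>x<d. bures_weight q x i * basis_entry d e \<rho>' i x * basis_entry d e \<rho> x y
        * (bures_weight q y i * basis_entry d e \<rho>' y i))"
    by (rule sum.cong[OF refl], rule sum.swap)
  also have "\<dots> = C_triple d e q \<rho> \<rho>'"
    unfolding C_triple_def by (intro sum.cong refl) (simp add: bures_weight_commute mult_ac)
  finally show ?thesis by simp
qed

lemma C_pair_real: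
  assumes "is_state d \<rho>" "is_state d \<rho>'"
  shows "Im (C_pair d e q \<rho> \<rho>') = 0"
proof -
  have "cnj (C_pair d e q \<rho> \<rho>') = (\<Sum>i<d. \<Sum>j<d. bures_weight q i j * basis_entry d e \<rho> j i * basis_entry d e \<rho>' i j)"
    unfolding C_pair_def cnj_sum by (simp add: basis_entry_conj assms)
  also have "\<dots> = C_pair d e q \<rho> \<rho>'"
    unfolding C_pair_def by (subst sum.swap) (simp add: bures_weight_commute)
  finally show ?thesis by (metis Reals_cnj_iff complex_is_Real_iff)
qed

lemma C_pair_sq_le_C_triple:
  assumes onb: "orthonormal_basis d e" and "is_state d \<rho>" "is_state d \<rho>'"
  shows "(Re (C_pair d e q \<rho> \<rho>'))\<^sup>2 \<le> Re (C_triple d e q \<rho> \<rho>')"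
proof -
  let ?A = "basis_entry d e \<rho>"
  have herm: "\<forall>x<d. \<forall>y<d. ?A y x = cnj (?A x y)" using basis_entry_conj[OF assms(2)] by simp
  have unit: "form_sum d ?A (\<lambda>i x. idop x i) (\<lambda>i x. idop x i) = 1"
    unfolding form_sum_def using basis_entry_trace[OF onb mtrace_state[OF assms(2)]] by simp
  have "(Re (C_pair d e q \<rho> \<rho>'))\<^sup>2 \<le> (cmod (C_pair d e q \<rho> \<rho>'))\<^sup>2"
    by (simp add: abs_Re_le_cmod power2_le_iff_abs_le)
  also have "\<dots> \<le> Re (C_triple d e q \<rho> \<rho>')"
    unfolding C_pair_as_form C_triple_as_form[OF assms(3)]
    using basis_entry_psd[OF assms(2)] by (intro form_sum_cauchy_schwarz[OF herm _ unit]) blast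
  finally show ?thesis .
qed

lemma swap_expect_ge:
  assumes onb: "orthonormal_basis d e" and t: "t < T" and states: "\<forall>r<T. is_state d (\<rho>s r)"
  shows "(\<Sum>s\<in>{..<T} - {t}. Re (C_pair d e q (\<rho>s s) (\<rho>s t)))\<^sup>2 / real T ^ 4
       \<le> Re (swap_expect d T (Cop d e q) \<rho>s t)"
proof -
  let ?S = "{..<T} - {t}"
  let ?g = "\<lambda>s. Re (C_pair d e q (\<rho>s s) (\<rho>s t))"
  have "(\<Sum>s\<in>?S. ?g s)\<^sup>2 = (\<Sum>s\<in>?S. \<Sum>s'\<in>?S. ?g s * ?g s')"
    by (simp add: power2_eq_square sum_product)
  also have "\<dots> \<le> (\<Sum>s\<in>?S. \<Sum>s'\<in>?S. Re (if s = s' then C_triple d e q (\<rho>s s) (\<rho>s t)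
                    else C_pair d e q (\<rho>s s) (\<rho>s t) * C_pair d e q (\<rho>s s') (\<rho>s t)))"
    using states t
    by (intro sum_mono) (auto simp: C_pair_real power2_eq_square[symmetric] C_pair_sq_le_C_triple[OF onb])
  finally have "(\<Sum>s\<in>?S. ?g s)\<^sup>2 \<le> (\<Sum>s\<in>?S. \<Sum>s'\<in>?S. Re (if s = s' then C_triple d e q (\<rho>s s) (\<rho>s t)
                    else C_pair d e q (\<rho>s s) (\<rho>s t) * C_pair d e q (\<rho>s s') (\<rho>s t)))" .
  moreover have "Re (swap_expect d T (Cop d e q) \<rho>s t)
      = (\<Sum>s\<in>?S. \<Sum>s'\<in>?S. Re (if s = s' then C_triple d e q (\<rho>s s) (\<rho>s t)
                    else C_pair d e q (\<rho>s s) (\<rho>s t) * C_pair d e q (\<rho>s s') (\<rho>s t))) / real T ^ 4"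
    using states t mtrace_state
    by (simp add: swap_expect_eq[OF onb t] Re_sum power_divide flip: power_mult)
  ultimately show ?thesis by (simp add: divide_right_mono)
qed

section \<open>The Bures \<open>\<chi>\<^sup>2\<close>-divergence of the average state\<close>

lemma expect_tens_Cop: "expect (idx2 d) (tens \<rho> \<rho>') (Cop d e q) = C_pair d e q \<rho> \<rho>'"
proof -
  let ?F = "\<lambda>a c a' c' i j. bures_weight q i j * (cnj (e i a) * \<rho> a c * e j c) * (cnj (e j a') * \<rho>' a' c' * e i c')"
  have "expect (idx2 d) (tens \<rho> \<rho>') (Cop d e q)
      = (\<Sum>a<d. \<Sum>a'<d. \<Sum>c<d. \<Sum>c'<d. \<rho> a c * \<rho>' a' c' * Cop d e q (c, c') (a, a'))"
    by (simp add: expect_def mtrace_def mmul_def tens_def sum.cartesian_product')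
  also have "\<dots> = (\<Sum>a<d. \<Sum>a'<d. \<Sum>c<d. \<Sum>c'<d. \<Sum>i<d. \<Sum>j<d. ?F a c a' c' i j)"
    by (simp add: Cop_eq sum_distrib_left mult_ac)
  also have "\<dots> = (\<Sum>a<d. \<Sum>c<d. \<Sum>a'<d. \<Sum>c'<d. \<Sum>i<d. \<Sum>j<d. ?F a c a' c' i j)"
    by (rule sum.cong[OF refl], rule sum.swap)
  also have "\<dots> = (\<Sum>a<d. \<Sum>c<d. \<Sum>i<d. \<Sum>j<d. \<Sum>a'<d. \<Sum>c'<d. ?F a c a' c' i j)"
    by (rule sum.cong[OF refl], rule sum.cong[OF refl], rule sum_swap_pairs)
  also have "\<dots> = (\<Sum>i<d. \<Sum>j<d. \<Sum>a<d. \<Sum>c<d. \<Sum>a'<d. \<Sum>c'<d. ?F a c a' c' i j)"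
    by (rule sum_swap_pairs)
  also have "\<dots> = C_pair d e q \<rho> \<rho>'"
    unfolding C_pair_def basis_entry_def by (simp add: sum_distrib_left sum_distrib_right mult_ac)
  finally show ?thesis .
qed

lemma bures_chi2_average:
  assumes states: "\<forall>t<T. is_state d (\<rho>s t)"
  shows "bures_chi2 d e q (\<lambda>a b. (1 / of_nat T) * (\<Sum>t<T. \<rho>s t a b)) + 1
       = (\<Sum>t<T. \<Sum>s<T. Re (C_pair d e q (\<rho>s s) (\<rho>s t))) / real T ^ 2"
proof -
  define \<rho> where "\<rho> = (\<lambda>a b. (1 / of_nat T) * (\<Sum>t<T. \<rho>s t a b))"
  define c :: complex where "c = 1 / of_nat T"
  have entry: "basis_entry d e \<rho> i j = c * (\<Sum>t<T. basis_entry d e (\<rho>s t) i j)" for i j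
    unfolding \<rho>_def c_def by (rule basis_entry_average)
  have entry_conj: "cnj (basis_entry d e \<rho> i j) = basis_entry d e \<rho> j i" for i j
    unfolding entry cnj_sum using states by (simp add: c_def basis_entry_conj)
  have norm_sq: "(cmod z)\<^sup>2 = Re (z * cnj z)" for z
    by (metis Re_complex_of_real complex_norm_square)
  have "bures_chi2 d e q \<rho> + 1 = (\<Sum>i<d. \<Sum>j<d. 2 / (q i + q j) * (cmod (basis_entry d e \<rho> i j))\<^sup>2)"
    unfolding bures_chi2_def basis_entry_def by simp
  also have "\<dots> = Re (\<Sum>i<d. \<Sum>j<d. bures_weight q i j * (basis_entry d e \<rho> i j * basis_entry d e \<rho> j i))"
    unfolding Re_sum norm_sq entry_conj bures_weight_def by simp
  also have "(\<Sum>i<d. \<Sum>j<d. bures_weight q i j * (basis_entry d e \<rho> i j * basis_entry d e \<rho> j i))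
      = c * c * (\<Sum>i<d. \<Sum>j<d. \<Sum>t<T. \<Sum>s<T.
                   bures_weight q i j * basis_entry d e (\<rho>s s) i j * basis_entry d e (\<rho>s t) j i)"
    unfolding entry by (simp add: sum_distrib_left sum_distrib_right mult_ac)
  also have "\<dots> = c * c * (\<Sum>t<T. \<Sum>s<T. C_pair d e q (\<rho>s s) (\<rho>s t))"
    unfolding C_pair_def by (subst sum_swap_pairs) simp
  also have "c * c = complex_of_real (1 / real T ^ 2)"
    unfolding c_def by (simp add: power2_eq_square)
  finally show ?thesis
    unfolding \<rho>_def by (simp add: Re_sum)
qed

lemma eigenvalues_sum_one:
  assumes onb: "orthonormal_basis d e" and sig: "is_state d \<sigma>"
    and eig: "\<forall>a<d. \<forall>b<d. \<sigma> a b = (\<Sum>i<d. complex_of_real (q i) * e i a * cnj (e i b))"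
  shows "(\<Sum>i<d. q i) = 1"
proof -
  have "1 = (\<Sum>a<d. \<Sum>i<d. complex_of_real (q i) * e i a * cnj (e i a))"
    using mtrace_state[OF sig] eig by (simp add: mtrace_def)
  also have "\<dots> = (\<Sum>i<d. complex_of_real (q i) * (\<Sum>a<d. cnj (e i a) * e i a))"
    by (subst sum.swap) (simp add: sum_distrib_left mult_ac)
  also have "\<dots> = (\<Sum>i<d. complex_of_real (q i))"
    using onb unfolding orthonormal_basis_def by simp
  finally show ?thesis
    by (metis of_real_eq_1_iff of_real_sum)
qed

lemma sum_sq_div_ge_one:
  fixes x q :: "nat \<Rightarrow> real"
  assumes q: "\<forall>i<d. 0 < q i" and sq: "(\<Sum>i<d. q i) = 1" and sx: "(\<Sum>i<d. x i) = 1"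
  shows "1 \<le> (\<Sum>i<d. (x i)\<^sup>2 / q i)"
proof -
  have "0 \<le> (\<Sum>i<d. (x i - q i)\<^sup>2 / q i)"
    using q by (intro sum_nonneg) auto
  also have "\<dots> = (\<Sum>i<d. (x i)\<^sup>2 / q i - 2 * x i + q i)"
    using q by (intro sum.cong refl) (auto simp: field_simps power2_eq_square)
  also have "\<dots> = (\<Sum>i<d. (x i)\<^sup>2 / q i) - 2 * (\<Sum>i<d. x i) + (\<Sum>i<d. q i)"
    by (simp add: sum.distrib sum_subtractf sum_distrib_left)
  finally show ?thesis using sq sx by simp
qed

lemma bures_chi2_nonneg:
  assumes onb: "orthonormal_basis d e" and q: "\<forall>i<d. 0 < q i" and sq: "(\<Sum>i<d. q i) = 1"
    and tr: "mtrace {..<d} \<rho> = 1"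
  shows "0 \<le> bures_chi2 d e q \<rho>"
proof -
  have "(\<Sum>i<d. Re (basis_entry d e \<rho> i i)) = 1"
    using basis_entry_trace[OF onb tr] by (metis Re_sum one_complex.simps(1))
  then have "1 \<le> (\<Sum>i<d. (Re (basis_entry d e \<rho> i i))\<^sup>2 / q i)"
    by (rule sum_sq_div_ge_one[OF q sq])
  also have "\<dots> \<le> (\<Sum>i<d. 2 / (q i + q i) * (cmod (basis_entry d e \<rho> i i))\<^sup>2)"
  proof (intro sum_mono)
    fix i assume i: "i \<in> {..<d}"
    have "(Re (basis_entry d e \<rho> i i))\<^sup>2 \<le> (cmod (basis_entry d e \<rho> i i))\<^sup>2"
      by (simp add: abs_Re_le_cmod power2_le_iff_abs_le)
    then show "(Re (basis_entry d e \<rho> i i))\<^sup>2 / q i \<le> 2 / (q i + q i) * (cmod (basis_entry d e \<rho> i i))\<^sup>2"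
      using q i by (simp add: divide_right_mono less_imp_le)
  qed
  also have "\<dots> \<le> (\<Sum>i<d. \<Sum>j<d. 2 / (q i + q j) * (cmod (basis_entry d e \<rho> i j))\<^sup>2)"
    using q by (intro sum_mono member_le_sum) (auto intro!: divide_nonneg_pos add_pos_pos)
  finally show ?thesis
    unfolding bures_chi2_def basis_entry_def by simp
qed

lemma lower_bound_from_square:
  fixes T m P :: real
  assumes "1 \<le> T" "1 \<le> m"
  shows "1 / T - 2 / T ^ 3 * P \<le> (T\<^sup>2 * m - P)\<^sup>2 / T ^ 5"
proof -
  have "(T\<^sup>2 * m - P)\<^sup>2 - (T ^ 4 - 2 * P * T\<^sup>2) = (P - T\<^sup>2 * (m - 1))\<^sup>2 + 2 * (m - 1) * T ^ 4"
    by (simp add: power2_eq_square algebra_simps eval_nat_numeral)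
  also have "\<dots> \<ge> 0" using assms by (intro add_nonneg_nonneg) auto
  finally have "(T ^ 4 - 2 * P * T\<^sup>2) / T ^ 5 \<le> (T\<^sup>2 * m - P)\<^sup>2 / T ^ 5"
    using assms by (intro divide_right_mono) auto
  moreover have "(T ^ 4 - 2 * P * T\<^sup>2) / T ^ 5 = 1 / T - 2 / T ^ 3 * P"
    using assms by (simp add: field_simps eval_nat_numeral)
  ultimately show ?thesis by simp
qed

lemma sum_swap_expect_ge:
  assumes onb: "orthonormal_basis d e" and T: "1 \<le> T" and states: "\<forall>t<T. is_state d (\<rho>s t)"
    and mu: "0 \<le> bures_chi2 d e q (\<lambda>a b. (1 / of_nat T) * (\<Sum>t<T. \<rho>s t a b))"
  shows "1 / real T - 2 / real T ^ 3 * (\<Sum>t<T. Re (C_pair d e q (\<rho>s t) (\<rho>s t)))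
       \<le> (\<Sum>t<T. Re (swap_expect d T (Cop d e q) \<rho>s t))"
proof -
  define \<mu> where "\<mu> = bures_chi2 d e q (\<lambda>a b. (1 / of_nat T) * (\<Sum>t<T. \<rho>s t a b))"
  define g where "g s t = Re (C_pair d e q (\<rho>s s) (\<rho>s t))" for s t
  define G where "G t = (\<Sum>s\<in>{..<T} - {t}. g s t)" for t
  define P where "P = (\<Sum>t<T. g t t)"
  have "(\<Sum>t<T. G t) = (\<Sum>t<T. (\<Sum>s<T. g s t) - g t t)"
    unfolding G_def by (intro sum.cong refl) (simp add: sum_diff1)
  also have "\<dots> = real T ^ 2 * (\<mu> + 1) - P"
    using bures_chi2_average[OF states, of e q] T
    unfolding \<mu>_def P_def g_def sum_subtractf by (simp add: field_simps)
  finally have sum_G: "(\<Sum>t<T. G t) = real T ^ 2 * (\<mu> + 1) - P" .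
  have "1 / real T - 2 / real T ^ 3 * P \<le> (real T ^ 2 * (\<mu> + 1) - P)\<^sup>2 / real T ^ 5"
    using T mu unfolding \<mu>_def by (intro lower_bound_from_square) auto
  also have "\<dots> \<le> (\<Sum>t<T. (G t)\<^sup>2) * real T / real T ^ 5"
    using sum_squared_le_sum_of_squares[of G "{..<T}"] unfolding sum_G by (simp add: divide_right_mono)
  also have "\<dots> = (\<Sum>t<T. (G t)\<^sup>2 / real T ^ 4)"
    using T by (simp add: sum_divide_distrib field_simps eval_nat_numeral)
  also have "\<dots> \<le> (\<Sum>t<T. Re (swap_expect d T (Cop d e q) \<rho>s t))"
    unfolding G_def g_def using onb states by (intro sum_mono swap_expect_ge) auto
  finally show ?thesis
    unfolding P_def g_def .
qed

lemma mtrace_average: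
  assumes "1 \<le> T" "\<forall>t<T. mtrace I (\<rho>s t) = 1"
  shows "mtrace I (\<lambda>a b. (1 / of_nat T) * (\<Sum>t<T. \<rho>s t a b)) = 1"
proof -
  have "mtrace I (\<lambda>a b. (1 / of_nat T) * (\<Sum>t<T. \<rho>s t a b)) = (1 / of_nat T) * (\<Sum>t<T. mtrace I (\<rho>s t))"
    unfolding mtrace_def by (simp add: sum_distrib_left sum.swap[of _ I])
  then show ?thesis using assms by simp
qed

lemma swap_expect_lower_bound:
  assumes d: "1 \<le> d" and T: "1 \<le> T" and sig: "is_state d \<sigma>" and onb: "orthonormal_basis d e"
    and q: "\<forall>i<d. 0 < q i"
    and eig: "\<forall>a<d. \<forall>b<d. \<sigma> a b = (\<Sum>i<d. complex_of_real (q i) * e i a * cnj (e i b))"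
    and states: "\<forall>t<T. is_state d (\<rho>s t)" and K: "0 \<le> K"
  shows "1 / real T - 2 / real T ^ 3 * (\<Sum>t<T. Re (C_pair d e q (\<rho>s t) (\<rho>s t)))
           - K * (real d ^ 2 / real T ^ 2 + real d * bures_chi2 d e q (\<lambda>a b. (1 / of_nat T) * (\<Sum>t<T. \<rho>s t a b))
                   / (Min (q ` {..<d}) * real T ^ 2))
         \<le> (\<Sum>t<T. Re (swap_expect d T (Cop d e q) \<rho>s t))"
proof -
  define \<rho> where "\<rho> = (\<lambda>a b. (1 / of_nat T) * (\<Sum>t<T. \<rho>s t a b))"
  have "mtrace {..<d} \<rho> = 1"
    unfolding \<rho>_def using T states by (intro mtrace_average) (auto simp: mtrace_state)
  then have \<mu>: "0 \<le> bures_chi2 d e q \<rho>"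
    by (rule bures_chi2_nonneg[OF onb q eigenvalues_sum_one[OF onb sig eig]])
  have "Min (q ` {..<d}) \<in> q ` {..<d}"
    using d by (intro Min_in) (auto simp: lessThan_empty_iff)
  then have "0 < Min (q ` {..<d})" using q by auto
  then have "0 \<le> K * (real d ^ 2 / real T ^ 2 + real d * bures_chi2 d e q \<rho> / (Min (q ` {..<d}) * real T ^ 2))"
    using \<mu> K by simp
  with sum_swap_expect_ge[OF onb T states \<mu>[unfolded \<rho>_def]] show ?thesis
    unfolding \<rho>_def by linarith
qed

theorem lemma8p10:
  "\<exists>K > (0::real). \<forall>(d::nat) (T::nat) (\<sigma>::nat \<Rightarrow> nat \<Rightarrow> complex) (e::nat \<Rightarrow> nat \<Rightarrow> complex)
       (q::nat \<Rightarrow> real) (\<rho>s::nat \<Rightarrow> nat \<Rightarrow> nat \<Rightarrow> complex).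
     1 \<le> d \<longrightarrow> 1 \<le> T \<longrightarrow>
     is_state d \<sigma> \<longrightarrow>
     orthonormal_basis d e \<longrightarrow>
     (\<forall>i<d. 0 < q i) \<longrightarrow>
     (\<forall>a<d. \<forall>b<d. \<sigma> a b = (\<Sum>i<d. complex_of_real (q i) * e i a * cnj (e i b))) \<longrightarrow>
     (\<forall>t<T. is_state d (\<rho>s t)) \<longrightarrow>
     (let \<gamma> = Min (q ` {..<d});
          \<rho> = (\<lambda>a b. (1 / of_nat T) * (\<Sum>t<T. \<rho>s t a b));
          \<mu> = bures_chi2 d e q \<rho>;
          C = Cop d e q;
          J = idx d T \<times> idx d T;
          \<rho>T = tensor_states T \<rho>s
      in (\<Sum>t<T. Re (expect J (tens \<rho>T \<rho>T)
                   (mmul J (mmul J (mmul J (tens (Mop T C t) idop) (Fswap t))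
                                   (tens (Mop T C t) idop)) (Fswap t))))
         \<ge> (1 / real T - 2 / real T ^ 3 *
               (\<Sum>t<T. Re (expect ({..<d} \<times> {..<d}) (tens (\<rho>s t) (\<rho>s t)) C)))
           - K * (real d ^ 2 / real T ^ 2 + real d * \<mu> / (\<gamma> * real T ^ 2)))"
proof (intro exI[of _ "1::real"] conjI allI impI, goal_cases)
  case (2 d T \<sigma> e q \<rho>s)
  then show ?case
    using swap_expect_lower_bound[OF 2 zero_le_one] by (simp add: Let_def swap_expect_def expect_tens_Cop)
qed simp

end
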